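(* Let $Y$ be an infinite-dimensional real Banach space. Then $\mathrm{A}(X,Y)\subsetneq\mathrm{Lip}_0(X,Y)$ for every nontrivial real Banach space $X$.
   Context: $\widetilde X=\{(x,y)\in X^2:x\neq y\}$. $\mathrm{Lip}_0(X,Y)$ is the Banach space of Lipschitz $f\colon X\to Y$ with $f(0)=0$ and norm $\|f\|=\sup_{(x,y)\in\widetilde X}\|f(x)-f(y)\|/\|x-y\|$. $\mathrm{A}(X,Y)$ is the set of $f\in\mathrm{Lip}_0(X,Y)$ for which there are $z\in Y$ with $\|z\|=\|f\|$ and $(x_n,y_n)\in\widetilde X$ with $\frac{f(x_n)-f(y_n)}{\|x_n-y_n\|}\to z$. *)

theory Defs
  imports "HOL-Analysis.Analysis"
begin

definition offdiag :: "('a \<times> 'a) set" where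
  "offdiag = {(x, y). x \<noteq> y}"

definition Lip0 :: "('a::real_normed_vector \<Rightarrow> 'b::real_normed_vector) set" where
  "Lip0 = {f. (\<exists>C. C-lipschitz_on UNIV f) \<and> f 0 = 0}"

definition lip_norm :: "('a::real_normed_vector \<Rightarrow> 'b::real_normed_vector) \<Rightarrow> real" where
  "lip_norm f = (SUP p\<in>offdiag. norm (f (fst p) - f (snd p)) / norm (fst p - snd p))"

definition Aset :: "('a::real_normed_vector \<Rightarrow> 'b::real_normed_vector) set" where
  "Aset = {f \<in> Lip0. \<exists>z. norm z = lip_norm f \<and>
     (\<exists>s :: nat \<Rightarrow> 'a \<times> 'a. (\<forall>n. s n \<in> offdiag) \<and>
        (\<lambda>n. (f (fst (s n)) - f (snd (s n))) /\<^sub>R norm (fst (s n) - snd (s n))) \<longlonglongrightarrow> z)}"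

end

theory Submission
  imports Defs
begin

text \<open>
  Riesz's lemma yields unit vectors \<open>e\<^sub>0, e\<^sub>1, \<dots>\<close> in \<open>Y\<close> with
  \<open>\<parallel>e\<^sub>k - c e\<^sub>j\<parallel> \<ge> 1/2\<close> for all \<open>j < k\<close> and all scalars \<open>c\<close>. Let \<open>g\<close> be the curve
  in \<open>Y\<close> that on \<open>[2k, 2k + 2]\<close> runs out along \<open>e\<^sub>k\<close> and back with speed
  \<open>h\<^sub>k = 1 - 1/(k + 2)\<close> (a tent of height \<open>h\<^sub>k/2\<close> over \<open>[2k + 1/2, 2k + 3/2]\<close>, zero elsewhere),
  and put \<open>f x = g \<parallel>x\<parallel>\<close>. A difference quotient of \<open>f\<close> either stays in one block, and
  then is a multiple \<open>c e\<^sub>k\<close> with \<open>|c| \<le> h\<^sub>k\<close>, or crosses the gap between two tents,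
  and then has norm at most \<open>2/3\<close>. So \<open>\<parallel>f\<parallel> = sup h\<^sub>k = 1\<close>, but difference quotients
  converging to a vector of norm 1 would eventually be multiples \<open>c e\<^sub>k\<close> with \<open>|c| > 7/8\<close>
  and unbounded \<open>k\<close>, and by the separation of the \<open>e\<^sub>k\<close> two such quotients with different
  \<open>k\<close> stay \<open>7/16\<close> apart.
\<close>

lemma closed_span_insert:
  fixes x :: "'a::real_normed_vector"
  assumes closed: "closed (span S)"
  shows "closed (span (insert x S))"
proof (cases "x \<in> span S")
  case True
  then show ?thesis using closed by (simp add: span_redundant)
next
  case False
  define d where "d = infdist x (span S)"
  have "d > 0"
    unfolding d_def using infdist_pos_not_in_closed[OF closed _ False] span_zero by blast
  have coeff_bound: "\<bar>t\<bar> * d \<le> norm (s + t *\<^sub>R x)" if "s \<in> span S" for s t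
  proof (cases "t = 0")
    case False
    have "- (1/t) *\<^sub>R s \<in> span S" using that by (simp add: span_scale span_neg)
    from infdist_le[OF this, of x] have "d \<le> norm (x + (1/t) *\<^sub>R s)" unfolding d_def by (simp add: dist_norm)
    moreover have "s + t *\<^sub>R x = t *\<^sub>R (x + (1/t) *\<^sub>R s)" using False by (simp add: algebra_simps)
    ultimately show ?thesis by (metis abs_ge_zero mult_left_mono norm_scaleR)
  qed simp
  show ?thesis
  proof (subst closed_sequential_limits, intro allI impI, elim conjE)
    fix u l assume u: "\<forall>n. u n \<in> span (insert x S)" and "u \<longlonglongrightarrow> l"
    then obtain t where t: "\<And>n. u n - t n *\<^sub>R x \<in> span S"
      unfolding span_breakdown_eq by metis
    have t_diff: "\<bar>t m - t n\<bar> * d \<le> norm (u m - u n)" for m n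
    proof -
      have "(u m - t m *\<^sub>R x) - (u n - t n *\<^sub>R x) \<in> span S" using t by (simp add: span_diff)
      from coeff_bound[OF this, of "t m - t n"] show ?thesis by (simp add: algebra_simps)
    qed
    have "Cauchy t"
    proof (rule CauchyI)
      fix e :: real assume "e > 0"
      have "Cauchy u" using \<open>u \<longlonglongrightarrow> l\<close> by (rule LIMSEQ_imp_Cauchy)
      moreover have "e * d > 0" using \<open>e > 0\<close> \<open>d > 0\<close> by simp
      ultimately obtain M where M: "\<And>m n. M \<le> m \<Longrightarrow> M \<le> n \<Longrightarrow> norm (u m - u n) < e * d"
        unfolding Cauchy_def dist_norm by blast
      show "\<exists>M. \<forall>m\<ge>M. \<forall>n\<ge>M. norm (t m - t n) < e"
      proof (intro exI allI impI)
        fix m n assume "M \<le> m" "M \<le> n"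
        with t_diff[of m n] M have "\<bar>t m - t n\<bar> * d < e * d" by (meson le_less_trans)
        with \<open>d > 0\<close> show "norm (t m - t n) < e" by simp
      qed
    qed
    then obtain \<tau> where "t \<longlonglongrightarrow> \<tau>" using Cauchy_convergent_iff convergent_def by blast
    then have "(\<lambda>n. u n - t n *\<^sub>R x) \<longlonglongrightarrow> l - \<tau> *\<^sub>R x"
      by (intro tendsto_intros \<open>u \<longlonglongrightarrow> l\<close>)
    then have "l - \<tau> *\<^sub>R x \<in> span S" by (rule closed_sequentially[OF closed t])
    then show "l \<in> span (insert x S)" using span_breakdown_eq by blast
  qed
qed

lemma closed_span_finite:
  fixes F :: "'a::real_normed_vector set"
  shows "finite F \<Longrightarrow> closed (span F)"
  by (induction F rule: finite_induct) (simp_all add: closed_span_insert)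

lemma riesz_lemma:
  fixes S :: "'a::real_normed_vector set"
  assumes "subspace S" "closed S" "S \<noteq> UNIV" "0 < \<theta>" "\<theta> < 1"
  obtains e where "norm e = 1" "\<And>v. v \<in> S \<Longrightarrow> \<theta> \<le> norm (e - v)"
proof -
  obtain y where "y \<notin> S" using assms(3) by blast
  have "S \<noteq> {}" using \<open>subspace S\<close> subspace_0 by blast
  define d where "d = infdist y S"
  have "d > 0" unfolding d_def using infdist_pos_not_in_closed \<open>closed S\<close> \<open>S \<noteq> {}\<close> \<open>y \<notin> S\<close> by blast
  then have "(INF s\<in>S. dist y s) < d / \<theta>"
    using assms(4,5) infdist_notempty[OF \<open>S \<noteq> {}\<close>] by (simp add: d_def field_simps)
  then obtain s0 where "s0 \<in> S" "dist y s0 < d / \<theta>"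
    using cINF_less_iff[OF \<open>S \<noteq> {}\<close>] by (meson bdd_belowI2 zero_le_dist)
  define r where "r = norm (y - s0)"
  have "r > 0" using \<open>s0 \<in> S\<close> \<open>y \<notin> S\<close> by (auto simp: r_def)
  have "\<theta> * r < d" using \<open>dist y s0 < d / \<theta>\<close> assms(4) by (simp add: r_def dist_norm field_simps)
  show thesis
  proof
    show "norm ((1/r) *\<^sub>R (y - s0)) = 1" using \<open>r > 0\<close> by (simp add: r_def)
  next
    fix v assume "v \<in> S"
    then have "s0 + r *\<^sub>R v \<in> S" using \<open>s0 \<in> S\<close> assms(1) by (simp add: subspace_add subspace_scale)
    then have "d \<le> norm (y - (s0 + r *\<^sub>R v))" unfolding d_def using infdist_le by (metis dist_norm)
    also have "y - (s0 + r *\<^sub>R v) = r *\<^sub>R ((1/r) *\<^sub>R (y - s0) - v)" using \<open>r > 0\<close> by (simp add: algebra_simps)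
    finally have "d \<le> norm ((1/r) *\<^sub>R (y - s0) - v) * r" using \<open>r > 0\<close> by (simp add: mult.commute)
    with \<open>\<theta> * r < d\<close> have "\<theta> * r < norm ((1/r) *\<^sub>R (y - s0) - v) * r" by linarith
    then show "\<theta> \<le> norm ((1/r) *\<^sub>R (y - s0) - v)"
      using mult_right_less_imp_less \<open>r > 0\<close> by fastforce
  qed
qed

text \<open>The earlier terms are listed with \<open>map\<close> over \<open>[0..<k]\<close> so that the function
  package sees every recursive call at an index below \<open>k\<close>; as a rewrite rule the
  equation loops, hence \<open>simp del\<close>.\<close>

fun riesz_sequence :: "nat \<Rightarrow> 'a::real_normed_vector" where
  "riesz_sequence k =
     (SOME e. norm e = 1 \<and> (\<forall>v \<in> span (set (map riesz_sequence [0..<k])). 1/2 \<le> norm (e - v)))"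

declare riesz_sequence.simps [simp del]

lemma riesz_sequence:
  assumes "\<not> (\<exists>B :: 'a::real_normed_vector set. finite B \<and> span B = UNIV)"
  shows "norm (riesz_sequence k :: 'a) = 1"
    and "v \<in> span (riesz_sequence ` {..<k}) \<Longrightarrow> 1/2 \<le> norm (riesz_sequence k - v :: 'a)"
proof -
  let ?F = "set (map riesz_sequence [0..<k]) :: 'a set"
  have F: "riesz_sequence ` {..<k} = ?F" by auto
  have "span ?F \<noteq> UNIV" using assms by blast
  then obtain e :: 'a where "norm e = 1" "\<And>v. v \<in> span ?F \<Longrightarrow> 1/2 \<le> norm (e - v)"
    by (rule riesz_lemma[OF subspace_span closed_span_finite[OF finite_set], where \<theta> = "1/2"]) auto
  then have "\<exists>e :: 'a. norm e = 1 \<and> (\<forall>v \<in> span ?F. 1/2 \<le> norm (e - v))" by blast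
  from someI_ex[OF this]
  have "norm (riesz_sequence k :: 'a) = 1 \<and> (\<forall>v \<in> span ?F. 1/2 \<le> norm (riesz_sequence k - v))"
    unfolding riesz_sequence.simps[of k] .
  then show "norm (riesz_sequence k :: 'a) = 1"
    and "v \<in> span (riesz_sequence ` {..<k}) \<Longrightarrow> 1/2 \<le> norm (riesz_sequence k - v :: 'a)"
    unfolding F by auto
qed

lemma lipschitz_diff_quotient_le:
  assumes "C-lipschitz_on UNIV f" "x \<noteq> y"
  shows "norm (f x - f y) / norm (x - y) \<le> C"
  using lipschitz_on_normD[OF assms(1)] assms(2) by (simp add: divide_le_eq)

lemma lip_norm_le:
  fixes f :: "'a::real_normed_vector \<Rightarrow> 'b::real_normed_vector"
  assumes "C-lipschitz_on UNIV f" "\<exists>x::'a. x \<noteq> 0"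
  shows "lip_norm f \<le> C"
proof -
  have "offdiag \<noteq> ({} :: ('a \<times> 'a) set)" using assms(2) by (auto simp: offdiag_def)
  then show ?thesis
    unfolding lip_norm_def
    by (rule cSUP_least) (auto simp: offdiag_def intro: lipschitz_diff_quotient_le[OF assms(1)])
qed

lemma diff_quotient_le_lip_norm:
  assumes "C-lipschitz_on UNIV f" "x \<noteq> y"
  shows "norm (f x - f y) / norm (x - y) \<le> lip_norm f"
proof -
  have "bdd_above ((\<lambda>p. norm (f (fst p) - f (snd p)) / norm (fst p - snd p)) ` offdiag)"
    by (rule bdd_aboveI2[where M = C]) (auto simp: offdiag_def intro: lipschitz_diff_quotient_le[OF assms(1)])
  moreover have "(x, y) \<in> offdiag" using assms(2) by (simp add: offdiag_def)
  ultimately show ?thesis unfolding lip_norm_def by (metis (no_types, lifting) cSUP_upper fst_conv snd_conv)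
qed

definition tent :: "real \<Rightarrow> real" where
  "tent u = max 0 (1/2 - \<bar>u - 1\<bar>)"

definition block :: "real \<Rightarrow> nat" where
  "block t = nat \<lfloor>t / 2\<rfloor>"

definition height :: "nat \<Rightarrow> real" where
  "height k = 1 - 1 / (real k + 2)"

definition bump_curve :: "(nat \<Rightarrow> 'a::real_normed_vector) \<Rightarrow> real \<Rightarrow> 'a" where
  "bump_curve E t = (height (block t) * tent (t - 2 * real (block t))) *\<^sub>R E (block t)"

lemma height_bounds: "1/2 \<le> height k" "height k < 1"
  by (auto simp: height_def field_simps)

lemma height_mono: "j \<le> k \<Longrightarrow> height j \<le> height k"
  by (auto simp: height_def field_simps)

lemma height_tendsto: "height \<longlonglongrightarrow> 1"
proof -
  have "(\<lambda>k. 1 / real (k + 2)) \<longlonglongrightarrow> 0"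
    using LIMSEQ_ignore_initial_segment[OF lim_1_over_n, of 2] by simp
  then have "(\<lambda>k. 1 - 1 / real (k + 2)) \<longlonglongrightarrow> 1 - 0"
    by (intro tendsto_intros)
  then show ?thesis by (simp add: height_def [abs_def] add.commute)
qed

lemma block_bounds:
  assumes "0 \<le> t" shows "2 * real (block t) \<le> t" "t < 2 * real (block t) + 2"
proof -
  have "real (block t) = of_int \<lfloor>t / 2\<rfloor>" using assms by (simp add: block_def)
  then show "2 * real (block t) \<le> t" "t < 2 * real (block t) + 2"
    using floor_le_iff[of "t / 2"] by linarith+
qed

lemma block_eq: "0 \<le> c \<Longrightarrow> c < 2 \<Longrightarrow> block (2 * real k + c) = k"
  unfolding block_def by (subst floor_unique[where z = "int k"]) (auto simp: field_simps)

lemma tent_lipschitz: "\<bar>tent u - tent v\<bar> \<le> \<bar>u - v\<bar>"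
  unfolding tent_def by arith

lemma bump_curve_0: "bump_curve E 0 = 0"
  by (simp add: bump_curve_def block_def tent_def)

lemma norm_bump_curve_le:
  assumes "norm (E (block t)) = 1"
  shows "norm (bump_curve E t) \<le> tent (t - 2 * real (block t))"
proof -
  have "0 \<le> tent (t - 2 * real (block t))" by (simp add: tent_def)
  moreover have "0 \<le> height (block t)" "height (block t) \<le> 1"
    using height_bounds[of "block t"] by linarith+
  ultimately show ?thesis
    using assms by (simp add: bump_curve_def abs_mult mult_left_le_one_le)
qed

lemma bump_curve_diff_same_block:
  assumes "block a = block b"
  obtains c where "bump_curve E a - bump_curve E b = c *\<^sub>R E (block a)"
    and "\<bar>c\<bar> \<le> height (block a) * \<bar>a - b\<bar>"
proof
  let ?k = "block a"
  let ?c = "height ?k * (tent (a - 2 * real ?k) - tent (b - 2 * real ?k))"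
  show "bump_curve E a - bump_curve E b = ?c *\<^sub>R E ?k"
    using assms by (simp add: bump_curve_def algebra_simps)
  have "\<bar>tent (a - 2 * real ?k) - tent (b - 2 * real ?k)\<bar> \<le> \<bar>a - b\<bar>"
    using tent_lipschitz[of "a - 2 * real ?k" "b - 2 * real ?k"] by simp
  then show "\<bar>?c\<bar> \<le> height ?k * \<bar>a - b\<bar>"
    using height_bounds(1)[of ?k] by (simp add: abs_mult mult_left_mono)
qed

locale unit_vectors =
  fixes E :: "nat \<Rightarrow> 'b::real_normed_vector"
  assumes norm_E: "norm (E k) = 1"
begin

lemma bump_curve_diff_other_blocks:
  assumes "0 \<le> a" "0 \<le> b" "block a < block b"
  shows "norm (bump_curve E a - bump_curve E b) \<le> 2/3 * \<bar>a - b\<bar>"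
proof -
  define A B where "A = 2 * real (block a)" and "B = 2 * real (block b)"
  have "A + 2 \<le> B" using assms(3) by (simp add: A_def B_def)
  moreover have "A \<le> a" "a < A + 2" "B \<le> b" "b < B + 2"
    using block_bounds \<open>0 \<le> a\<close> \<open>0 \<le> b\<close> by (auto simp: A_def B_def)
  ultimately have "tent (a - A) + tent (b - B) \<le> 2/3 * \<bar>a - b\<bar>"
    unfolding tent_def by (auto simp: max_def abs_if)
  moreover have "norm (bump_curve E a - bump_curve E b) \<le> tent (a - A) + tent (b - B)"
    using norm_triangle_ineq4[of "bump_curve E a" "bump_curve E b"]
      norm_bump_curve_le[of E a] norm_bump_curve_le[of E b] norm_E
    by (simp add: A_def B_def)
  ultimately show ?thesis by linarith
qed

lemma bump_curve_diff_cases: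
  assumes "0 \<le> a" "0 \<le> b"
  shows "norm (bump_curve E a - bump_curve E b) \<le> 2/3 * \<bar>a - b\<bar>
    \<or> (\<exists>c. bump_curve E a - bump_curve E b = c *\<^sub>R E (block a) \<and> \<bar>c\<bar> \<le> height (block a) * \<bar>a - b\<bar>)"
proof (cases "block a" "block b" rule: linorder_cases)
  case less
  then show ?thesis using bump_curve_diff_other_blocks[OF assms] by simp
next
  case equal
  then show ?thesis by (metis bump_curve_diff_same_block)
next
  case greater
  then show ?thesis using bump_curve_diff_other_blocks[OF assms(2,1)]
    by (simp add: norm_minus_commute abs_minus_commute)
qed

lemma bump_curve_lipschitz:
  assumes "0 \<le> a" "0 \<le> b"
  shows "norm (bump_curve E a - bump_curve E b) \<le> \<bar>a - b\<bar>"
  using bump_curve_diff_cases[OF assms]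
proof (elim disjE exE conjE)
  fix c assume "bump_curve E a - bump_curve E b = c *\<^sub>R E (block a)"
    and "\<bar>c\<bar> \<le> height (block a) * \<bar>a - b\<bar>"
  moreover have "height (block a) * \<bar>a - b\<bar> \<le> \<bar>a - b\<bar>"
    using height_bounds[of "block a"] by (intro mult_left_le_one_le) auto
  ultimately show ?thesis using norm_E by simp
next
  assume "norm (bump_curve E a - bump_curve E b) \<le> 2/3 * \<bar>a - b\<bar>"
  also have "2/3 * \<bar>a - b\<bar> \<le> \<bar>a - b\<bar>" by simp
  finally show ?thesis .
qed

lemma lipschitz_radial_bump:
  "1-lipschitz_on UNIV (\<lambda>x::'a::real_normed_vector. bump_curve E (norm x))"
proof (rule lipschitz_onI)
  fix x y :: 'a
  have "norm (bump_curve E (norm x) - bump_curve E (norm y)) \<le> \<bar>norm x - norm y\<bar>"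
    using bump_curve_lipschitz by simp
  also have "\<dots> \<le> norm (x - y)" by (rule norm_triangle_ineq3)
  finally show "dist (bump_curve E (norm x)) (bump_curve E (norm y)) \<le> 1 * dist x y"
    by (simp add: dist_norm)
qed simp

lemma radial_bump_in_Lip0:
  "(\<lambda>x::'a::real_normed_vector. bump_curve E (norm x)) \<in> Lip0"
  using lipschitz_radial_bump by (auto simp: Lip0_def bump_curve_0)

lemma lip_norm_radial_bump:
  assumes "\<exists>x::'a. x \<noteq> 0"
  shows "lip_norm (\<lambda>x::'a::real_normed_vector. bump_curve E (norm x)) = 1"
proof (rule antisym)
  show "lip_norm (\<lambda>x::'a. bump_curve E (norm x)) \<le> 1"
    by (rule lip_norm_le[OF lipschitz_radial_bump assms])
  obtain u :: 'a where "norm u = 1" using assms by (metis norm_sgn)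
  have "height k \<le> lip_norm (\<lambda>x::'a. bump_curve E (norm x))" for k
  proof -
    define x y where "x = (2 * real k + 1) *\<^sub>R u" and "y = (2 * real k + 1/2) *\<^sub>R u"
    have "x - y = (1/2) *\<^sub>R u" unfolding x_def y_def scaleR_diff_left [symmetric] by simp
    moreover have "bump_curve E (norm x) = (height k / 2) *\<^sub>R E k"
      using block_eq[of 1 k] \<open>norm u = 1\<close> by (simp add: x_def bump_curve_def tent_def)
    moreover have "bump_curve E (norm y) = 0"
      using block_eq[of "1/2" k] \<open>norm u = 1\<close> by (simp add: y_def bump_curve_def tent_def)
    ultimately have quotient: "norm (bump_curve E (norm x) - bump_curve E (norm y)) / norm (x - y) = height k"
      using \<open>norm u = 1\<close> norm_E height_bounds(1)[of k] by simp
    have "x \<noteq> y" using \<open>x - y = (1/2) *\<^sub>R u\<close> \<open>norm u = 1\<close> by auto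
    from diff_quotient_le_lip_norm[OF lipschitz_radial_bump this] show ?thesis
      unfolding quotient .
  qed
  then show "1 \<le> lip_norm (\<lambda>x::'a. bump_curve E (norm x))"
    by (intro LIMSEQ_le_const2[OF height_tendsto]) auto
qed

lemma radial_bump_quotient_cases:
  fixes x y :: "'a::real_normed_vector"
  assumes "x \<noteq> y"
  defines "q \<equiv> (bump_curve E (norm x) - bump_curve E (norm y)) /\<^sub>R norm (x - y)"
  shows "norm q \<le> 2/3 \<or> (\<exists>k c. q = c *\<^sub>R E k \<and> \<bar>c\<bar> \<le> height k)"
proof -
  define n where "n = norm (x - y)"
  have "n > 0" using assms(1) by (simp add: n_def)
  have "\<bar>norm x - norm y\<bar> \<le> n" unfolding n_def by (rule norm_triangle_ineq3)
  from bump_curve_diff_cases[OF norm_ge_zero norm_ge_zero, of x y] show ?thesis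
  proof (elim disjE exE conjE)
    assume "norm (bump_curve E (norm x) - bump_curve E (norm y)) \<le> 2/3 * \<bar>norm x - norm y\<bar>"
    also have "\<dots> \<le> 2/3 * n" using \<open>\<bar>norm x - norm y\<bar> \<le> n\<close> by simp
    finally have "norm (bump_curve E (norm x) - bump_curve E (norm y)) / n \<le> 2/3"
      using \<open>n > 0\<close> by (simp add: divide_le_eq)
    moreover have "norm q = norm (bump_curve E (norm x) - bump_curve E (norm y)) / n"
      by (simp add: q_def n_def divide_inverse_commute)
    ultimately show ?thesis by simp
  next
    fix c assume c: "bump_curve E (norm x) - bump_curve E (norm y) = c *\<^sub>R E (block (norm x))"
      and "\<bar>c\<bar> \<le> height (block (norm x)) * \<bar>norm x - norm y\<bar>"
    moreover have "height (block (norm x)) * \<bar>norm x - norm y\<bar> \<le> height (block (norm x)) * n"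
      using \<open>\<bar>norm x - norm y\<bar> \<le> n\<close> height_bounds(1)[of "block (norm x)"] by (simp add: mult_left_mono)
    ultimately have "\<bar>c / n\<bar> \<le> height (block (norm x))"
      using \<open>n > 0\<close> by (simp add: divide_le_eq)
    moreover have "q = (c / n) *\<^sub>R E (block (norm x))" by (simp add: q_def c n_def divide_inverse_commute)
    ultimately show ?thesis by blast
  qed
qed

end

locale separated_unit_vectors = unit_vectors E for E :: "nat \<Rightarrow> 'b::real_normed_vector" +
  assumes separated: "j < k \<Longrightarrow> 1/2 \<le> norm (E k - c *\<^sub>R E j)"
begin

lemma radial_bump_not_in_Aset:
  assumes "\<exists>x::'a. x \<noteq> 0"
  shows "(\<lambda>x::'a::real_normed_vector. bump_curve E (norm x)) \<notin> Aset"
proof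
  let ?f = "\<lambda>x::'a. bump_curve E (norm x)"
  assume "?f \<in> Aset"
  then obtain z and s :: "nat \<Rightarrow> 'a \<times> 'a" where "norm z = lip_norm ?f" and s: "\<forall>n. s n \<in> offdiag"
    and "(\<lambda>n. (?f (fst (s n)) - ?f (snd (s n))) /\<^sub>R norm (fst (s n) - snd (s n))) \<longlonglongrightarrow> z"
    unfolding Aset_def by blast
  moreover define q where "q n = (?f (fst (s n)) - ?f (snd (s n))) /\<^sub>R norm (fst (s n) - snd (s n))" for n
  ultimately have "q \<longlonglongrightarrow> z" and "norm z = 1"
    using lip_norm_radial_bump[OF assms] by (simp_all add: q_def [abs_def])
  have q_cases: "norm (q n) \<le> 2/3 \<or> (\<exists>k c. q n = c *\<^sub>R E k \<and> \<bar>c\<bar> \<le> height k)" for n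
    using radial_bump_quotient_cases s by (auto simp: q_def offdiag_def case_prod_beta)
  have "eventually (\<lambda>n. dist (q n) z < 1/8) sequentially"
    by (rule tendstoD[OF \<open>q \<longlonglongrightarrow> z\<close>]) simp
  then obtain N where close: "\<And>n. N \<le> n \<Longrightarrow> norm (q n - z) < 1/8"
    by (auto simp: eventually_sequentially dist_norm)
  have on_axis: "\<exists>k c. q n = c *\<^sub>R E k \<and> \<bar>c\<bar> \<le> height k \<and> 7/8 < \<bar>c\<bar>" if "N \<le> n" for n
  proof -
    have "7/8 < norm (q n)"
      using close[OF that] \<open>norm z = 1\<close> norm_triangle_ineq2[of z "q n"] by (simp add: norm_minus_commute)
    moreover obtain k c where "q n = c *\<^sub>R E k" "\<bar>c\<bar> \<le> height k"
      using q_cases[of n] calculation by auto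
    ultimately show ?thesis using norm_E by (intro exI[of _ k] exI[of _ c]) simp
  qed
  then obtain k0 c0 where q_N: "q N = c0 *\<^sub>R E k0" by blast
  have "eventually (\<lambda>n. height k0 < norm (q n)) sequentially"
    using order_tendstoD(1)[OF tendsto_norm[OF \<open>q \<longlonglongrightarrow> z\<close>]] height_bounds(2) \<open>norm z = 1\<close> by simp
  then obtain m where "N \<le> m" and "height k0 < norm (q m)"
    by (metis eventually_sequentially nle_le)
  then obtain k1 c1 where q_m: "q m = c1 *\<^sub>R E k1" and "\<bar>c1\<bar> \<le> height k1" "7/8 < \<bar>c1\<bar>"
    using on_axis by blast
  have "k0 < k1"
  proof (rule ccontr)
    assume "\<not> k0 < k1"
    then have "height k1 \<le> height k0" by (simp add: height_mono)
    then show False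
      using \<open>height k0 < norm (q m)\<close> \<open>\<bar>c1\<bar> \<le> height k1\<close> by (simp add: q_m norm_E)
  qed
  have "\<bar>c1\<bar> * (1/2) \<le> \<bar>c1\<bar> * norm (E k1 - (c0 / c1) *\<^sub>R E k0)"
    using separated[OF \<open>k0 < k1\<close>, of "c0 / c1"] by (intro mult_left_mono) simp_all
  also have "\<dots> = norm (q m - q N)"
    using \<open>7/8 < \<bar>c1\<bar>\<close> by (simp add: q_m q_N algebra_simps flip: norm_scaleR)
  also have "\<dots> \<le> norm (q m - z) + norm (q N - z)"
    using norm_triangle_ineq4[of "q m - z" "q N - z"] by simp
  also have "\<dots> < 1/4" using close[OF \<open>N \<le> m\<close>] close[of N] by simp
  finally show False using \<open>7/8 < \<bar>c1\<bar>\<close> by simp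
qed

end

lemma separated_unit_vectors_riesz_sequence:
  assumes "\<not> (\<exists>B :: 'a::real_normed_vector set. finite B \<and> span B = UNIV)"
  shows "separated_unit_vectors (riesz_sequence :: nat \<Rightarrow> 'a)"
proof unfold_locales
  show "norm (riesz_sequence k :: 'a) = 1" for k by (rule riesz_sequence(1)[OF assms])
  fix j k :: nat and c :: real
  assume "j < k"
  then have "c *\<^sub>R riesz_sequence j \<in> span (riesz_sequence ` {..<k} :: 'a set)"
    by (intro span_mul span_base) simp
  then show "1/2 \<le> norm (riesz_sequence k - c *\<^sub>R riesz_sequence j :: 'a)"
    by (rule riesz_sequence(2)[OF assms])
qed

theorem proposition2p7:
  assumes "\<not> (\<exists>B :: 'b::banach set. finite B \<and> span B = UNIV)"
    and "\<exists>x :: 'a::banach. x \<noteq> 0"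
  shows "(Aset :: ('a \<Rightarrow> 'b) set) \<subset> Lip0"
proof -
  interpret separated_unit_vectors "riesz_sequence :: nat \<Rightarrow> 'b"
    using assms(1) by (rule separated_unit_vectors_riesz_sequence)
  have "(Aset :: ('a \<Rightarrow> 'b) set) \<subseteq> Lip0" by (auto simp: Aset_def)
  moreover have "(\<lambda>x::'a. bump_curve riesz_sequence (norm x) :: 'b) \<in> Lip0 - Aset"
    using radial_bump_in_Lip0 radial_bump_not_in_Aset[OF assms(2)] by blast
  ultimately show ?thesis by blast
qed

end
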